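(* Let $M$ be a timelike surface in $\mathbb{R}^{n,1}$ with a canonical null direction with respect to a constant unit spacelike vector $Z$, and let $W$ and $a$ be as below. Then $$\Delta a=-2Ka-2\,W(K),$$ where $K$ is the Gaussian curvature of $M$. In particular, if $K\equiv0$ then $a$ is harmonic.
   Context: $\mathbb{R}^{n,1}$ is $\mathbb{R}^{n+1}$ with the metric $-dx_1^2+dx_2^2+\dots+dx_{n+1}^2$. A surface is timelike if the induced metric has signature $(1,1)$; a vector $v$ is lightlike if $v\ne0$ and $\langle v,v\rangle=0$. For a constant vector $Z$, $Z=Z^\top+Z^\perp$ along $M$; $M$ has a canonical null direction with respect to $Z$ if $Z^\top$ is lightlike everywhere on $M$. $W$ is the unique lightlike tangent field with $\langle Z^\top,W\rangle=-1$, and $a:=\langle II(W,W),Z^\perp\rangle$ with $II$ the second fundamental form. $\Delta$ is the trace of the Hessian with respect to the induced Lorentzian metric. *)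

theory Defs
  imports "HOL-Analysis.Analysis"
begin

text \<open>Minkowski space R^{n,1} is modelled as real \<times> real^'n: the first component is the
  time coordinate x_1, the second component holds x_2, ..., x_{n+1}.
  A (piece of a) surface is given by a local parametrisation X defined on an open set
  U of the (u_0,u_1)-plane real \<times> real.\<close>

type_synonym 'n mink = "real \<times> (real ^ 'n)"

definition lor :: "'n::finite mink \<Rightarrow> 'n mink \<Rightarrow> real" where
  "lor x y = - fst x * fst y + snd x \<bullet> snd y"

definition lightlike :: "'n::finite mink \<Rightarrow> bool" where
  "lightlike v \<longleftrightarrow> v \<noteq> 0 \<and> lor v v = 0"

definition cbasis :: "nat \<Rightarrow> real \<times> real" where
  "cbasis i = (if i = 0 then (1, 0) else (0, 1))"

definition pd :: "nat \<Rightarrow> (real \<times> real \<Rightarrow> 'b::real_normed_vector) \<Rightarrow> real \<times> real \<Rightarrow> 'b" where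
  "pd i f p = frechet_derivative f (at p) (cbasis i)"

fun Ck :: "nat \<Rightarrow> (real \<times> real) set \<Rightarrow> (real \<times> real \<Rightarrow> 'b::real_normed_vector) \<Rightarrow> bool" where
  "Ck 0 U f = continuous_on U f"
| "Ck (Suc k) U f = (f differentiable_on U \<and> (\<forall>i<2. Ck k U (pd i f)))"

definition Cinf_on :: "(real \<times> real) set \<Rightarrow> (real \<times> real \<Rightarrow> 'b::real_normed_vector) \<Rightarrow> bool" where
  "Cinf_on U f \<longleftrightarrow> (\<forall>k. Ck k U f)"

definition gm :: "(real \<times> real \<Rightarrow> 'n::finite mink) \<Rightarrow> nat \<Rightarrow> nat \<Rightarrow> real \<times> real \<Rightarrow> real" where
  "gm X i j p = lor (pd i X p) (pd j X p)"

definition detg :: "(real \<times> real \<Rightarrow> 'n::finite mink) \<Rightarrow> real \<times> real \<Rightarrow> real" where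
  "detg X p = gm X 0 0 p * gm X 1 1 p - gm X 0 1 p * gm X 1 0 p"

definition ginv :: "(real \<times> real \<Rightarrow> 'n::finite mink) \<Rightarrow> nat \<Rightarrow> nat \<Rightarrow> real \<times> real \<Rightarrow> real" where
  "ginv X i j p =
     (if i = 0 \<and> j = 0 then gm X 1 1 p
      else if i = 1 \<and> j = 1 then gm X 0 0 p
      else - gm X i j p) / detg X p"

text \<open>Timelike: the induced metric has signature (1,1); for a 2x2 symmetric matrix this
  means negative determinant (in particular X is an immersion).\<close>
definition timelike_surface :: "(real \<times> real) set \<Rightarrow> (real \<times> real \<Rightarrow> 'n::finite mink) \<Rightarrow> bool" where
  "timelike_surface U X \<longleftrightarrow> open U \<and> Cinf_on U X \<and> (\<forall>p\<in>U. detg X p < 0)"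

definition tanp :: "(real \<times> real \<Rightarrow> 'n::finite mink) \<Rightarrow> 'n mink \<Rightarrow> real \<times> real \<Rightarrow> 'n mink" where
  "tanp X v p = (\<Sum>i<2. \<Sum>j<2. (ginv X i j p * lor v (pd j X p)) *\<^sub>R pd i X p)"

definition norp :: "(real \<times> real \<Rightarrow> 'n::finite mink) \<Rightarrow> 'n mink \<Rightarrow> real \<times> real \<Rightarrow> 'n mink" where
  "norp X v p = v - tanp X v p"

definition chr :: "(real \<times> real \<Rightarrow> 'n::finite mink) \<Rightarrow> nat \<Rightarrow> nat \<Rightarrow> nat \<Rightarrow> real \<times> real \<Rightarrow> real" where
  "chr X k i j p = 1/2 * (\<Sum>l<2. ginv X k l p *
      (pd i (gm X j l) p + pd j (gm X i l) p - pd l (gm X i j) p))"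

text \<open>Gaussian curvature K = <R(d0,d1)d1, d0> / (g00 g11 - g01^2), with
  R(A,B) = nabla_A nabla_B - nabla_B nabla_A - nabla_[A,B].\<close>
definition gauss_curv :: "(real \<times> real \<Rightarrow> 'n::finite mink) \<Rightarrow> real \<times> real \<Rightarrow> real" where
  "gauss_curv X p =
     (\<Sum>l<2. (pd 0 (chr X l 1 1) p - pd 1 (chr X l 0 1) p
              + (\<Sum>k<2. chr X k 1 1 p * chr X l 0 k p - chr X k 0 1 p * chr X l 1 k p))
            * gm X l 0 p) / detg X p"

definition lap :: "(real \<times> real \<Rightarrow> 'n::finite mink) \<Rightarrow> (real \<times> real \<Rightarrow> real) \<Rightarrow> real \<times> real \<Rightarrow> real" where
  "lap X f p = (\<Sum>i<2. \<Sum>j<2. ginv X i j p *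
       (pd i (pd j f) p - (\<Sum>k<2. chr X k i j p * pd k f p)))"

definition sff :: "(real \<times> real \<Rightarrow> 'n::finite mink) \<Rightarrow> nat \<Rightarrow> nat \<Rightarrow> real \<times> real \<Rightarrow> 'n mink" where
  "sff X i j p = norp X (pd i (pd j X) p) p"

definition Ztop :: "(real \<times> real \<Rightarrow> 'n::finite mink) \<Rightarrow> 'n mink \<Rightarrow> real \<times> real \<Rightarrow> 'n mink" where
  "Ztop X Z p = tanp X Z p"

definition Zperp :: "(real \<times> real \<Rightarrow> 'n::finite mink) \<Rightarrow> 'n mink \<Rightarrow> real \<times> real \<Rightarrow> 'n mink" where
  "Zperp X Z p = norp X Z p"

definition canonical_null_direction ::
  "(real \<times> real) set \<Rightarrow> (real \<times> real \<Rightarrow> 'n::finite mink) \<Rightarrow> 'n mink \<Rightarrow> bool" where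
  "canonical_null_direction U X Z \<longleftrightarrow> (\<forall>p\<in>U. lightlike (Ztop X Z p))"

text \<open>W: the unique lightlike tangent vector with <Z^T, W> = -1.\<close>
definition Wfield :: "(real \<times> real \<Rightarrow> 'n::finite mink) \<Rightarrow> 'n mink \<Rightarrow> real \<times> real \<Rightarrow> 'n mink" where
  "Wfield X Z p = (THE w. w \<in> span {pd 0 X p, pd 1 X p} \<and> lightlike w \<and> lor (Ztop X Z p) w = -1)"

text \<open>Coordinate components W = W^0 d_0 X + W^1 d_1 X.\<close>
definition Wcoef :: "(real \<times> real \<Rightarrow> 'n::finite mink) \<Rightarrow> 'n mink \<Rightarrow> nat \<Rightarrow> real \<times> real \<Rightarrow> real" where
  "Wcoef X Z i p = (\<Sum>j<2. ginv X i j p * lor (Wfield X Z p) (pd j X p))"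

definition acoef :: "(real \<times> real \<Rightarrow> 'n::finite mink) \<Rightarrow> 'n mink \<Rightarrow> real \<times> real \<Rightarrow> real" where
  "acoef X Z p = lor (\<Sum>i<2. \<Sum>j<2. (Wcoef X Z i p * Wcoef X Z j p) *\<^sub>R sff X i j p) (Zperp X Z p)"

definition Wderiv :: "(real \<times> real \<Rightarrow> 'n::finite mink) \<Rightarrow> 'n mink \<Rightarrow> (real \<times> real \<Rightarrow> real) \<Rightarrow> real \<times> real \<Rightarrow> real" where
  "Wderiv X Z f p = (\<Sum>i<2. Wcoef X Z i p * pd i f p)"

end

theory Submission
  imports Defs
begin

text \<open>Write \<open>T = Z\<^sup>\<top>\<close> and \<open>t\<^sub>i = \<langle>\<partial>\<^sub>i X, Z\<rangle> = \<langle>\<partial>\<^sub>i X, T\<rangle>\<close>. As \<open>Z\<close> is constant,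
  \<open>h\<^sub>k\<^sub>m = \<langle>\<partial>\<^sub>k T, \<partial>\<^sub>m X\<rangle> = \<langle>Z\<^sup>\<perp>, \<partial>\<^sub>k \<partial>\<^sub>m X\<rangle>\<close> is symmetric, and differentiating
  \<open>\<langle>T, T\<rangle> = 0\<close> puts \<open>T\<close> into its kernel. Since \<open>T\<^sup>i t\<^sub>i = \<langle>T, T\<rangle> = 0\<close>, this forces
  \<open>h = a t \<otimes> t\<close>, i.e. \<open>\<nabla>T = a t \<otimes> T\<close>, and \<open>a = h(W, W)\<close> because \<open>\<langle>T, W\<rangle> = -1\<close>.
  The Gauss and Codazzi equations then give \<open>T(a) = K\<close>. In the null frame \<open>(T, W)\<close> the inverse
  metric is \<open>-(T \<otimes> W + W \<otimes> T)\<close>, so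
  \<open>\<Delta>a = -2 Hess a(W, T) = -2 (W(T(a)) - (\<nabla>\<^sub>W T) a) = -2 W(K) - 2 a K\<close>,
  using \<open>\<nabla>\<^sub>W T = a \<langle>W, T\<rangle> T = -a T\<close>.\<close>

section \<open>Partial derivatives and smooth functions on the parameter plane\<close>

lemma pd_has_derivative: "(f has_derivative f') (at p) \<Longrightarrow> pd i f p = f' (cbasis i)"
  unfolding pd_def by (metis frechet_derivative_at)

lemma pd_const [simp]: "pd i (\<lambda>q. c) = (\<lambda>q. 0)"
  by (simp add: pd_def fun_eq_iff)

lemma pd_index_nonzero: "i \<noteq> 0 \<Longrightarrow> pd i f = pd 1 f"
  by (simp add: pd_def cbasis_def fun_eq_iff)

lemma pd_cong_open:
  assumes "open U" "p \<in> U" "\<And>q. q \<in> U \<Longrightarrow> f q = g q"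
  shows "pd i f p = pd i g p"
proof -
  have "(f has_derivative D) (at p) \<longleftrightarrow> (g has_derivative D) (at p)" for D
    using has_derivative_transform_within_open[OF _ assms(1,2)] assms(3) by metis
  then show ?thesis
    unfolding pd_def frechet_derivative_def by simp
qed

lemma pd_add:
  fixes f g :: "real \<times> real \<Rightarrow> 'b::real_normed_vector"
  assumes "f differentiable (at p)" "g differentiable (at p)"
  shows "pd i (\<lambda>q. f q + g q) p = pd i f p + pd i g p"
proof -
  obtain f' g' where f': "(f has_derivative f') (at p)" and g': "(g has_derivative g') (at p)"
    using assms unfolding differentiable_def by blast
  show ?thesis
    using pd_has_derivative[OF has_derivative_add[OF f' g']] pd_has_derivative[OF f']
      pd_has_derivative[OF g'] by simp
qed

lemma pd_bilinear:
  assumes "bounded_bilinear B" "f differentiable (at p)" "g differentiable (at p)"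
  shows "pd i (\<lambda>q. B (f q) (g q)) p = B (f p) (pd i g p) + B (pd i f p) (g p)"
proof -
  obtain f' g' where f': "(f has_derivative f') (at p)" and g': "(g has_derivative g') (at p)"
    using assms unfolding differentiable_def by blast
  show ?thesis
    using bounded_bilinear.FDERIV[OF assms(1) f' g'] f' g' by (simp add: pd_has_derivative)
qed

lemma differentiable_bilinear:
  assumes "bounded_bilinear B" "f differentiable (at p)" "g differentiable (at p)"
  shows "(\<lambda>q. B (f q) (g q)) differentiable (at p)"
  using assms bounded_bilinear.FDERIV unfolding differentiable_def by blast

lemma pd_inverse:
  fixes f :: "real \<times> real \<Rightarrow> real"
  assumes "f differentiable (at p)" "f p \<noteq> 0"
  shows "pd i (\<lambda>q. inverse (f q)) p = - (pd i f p * inverse (f p) * inverse (f p))"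
proof -
  obtain f' where f': "(f has_derivative f') (at p)"
    using assms unfolding differentiable_def by blast
  show ?thesis
    using Deriv.has_derivative_inverse[OF assms(2) f'] f' by (simp add: pd_has_derivative)
qed

lemma Ck_SucD: "Ck (Suc k) U f \<Longrightarrow> Ck k U f"
  by (induction k arbitrary: f) (simp_all add: differentiable_imp_continuous_on)

lemma Ck_Suc_differentiable_at: "open U \<Longrightarrow> Ck (Suc k) U f \<Longrightarrow> p \<in> U \<Longrightarrow> f differentiable (at p)"
  by (simp add: differentiable_on_eq_differentiable_at)

lemma Ck_pd: "Ck (Suc k) U f \<Longrightarrow> Ck k U (pd i f)"
  by (cases "i = 0") (simp_all add: pd_index_nonzero[of i])

lemma Ck_cong:
  fixes f g :: "real \<times> real \<Rightarrow> 'b::real_normed_vector"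
  assumes "open U"
  shows "Ck k U f \<Longrightarrow> (\<And>q. q \<in> U \<Longrightarrow> f q = g q) \<Longrightarrow> Ck k U g"
proof (induction k arbitrary: f g)
  case 0
  then show ?case using continuous_on_cong[of U U f g] by simp
next
  case (Suc k)
  have "g differentiable (at p)" if "p \<in> U" for p
    using Ck_Suc_differentiable_at[OF assms Suc.prems(1) that] Suc.prems(2)
      has_derivative_transform_within_open[OF _ assms that]
    unfolding differentiable_def by blast
  moreover have "Ck k U (pd i g)" if "i < 2" for i
  proof (rule Suc.IH)
    show "Ck k U (pd i f)" using Suc.prems(1) that by simp
    show "pd i f q = pd i g q" if "q \<in> U" for q
      using pd_cong_open[OF assms that] Suc.prems(2) by blast
  qed
  ultimately show ?case
    by (simp add: differentiable_on_eq_differentiable_at[OF assms])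
qed

lemma Ck_const: "Ck k U (\<lambda>q. c)"
  by (induction k arbitrary: c) simp_all

lemma Ck_add:
  fixes f g :: "real \<times> real \<Rightarrow> 'b::real_normed_vector"
  assumes "open U"
  shows "Ck k U f \<Longrightarrow> Ck k U g \<Longrightarrow> Ck k U (\<lambda>q. f q + g q)"
proof (induction k arbitrary: f g)
  case 0
  then show ?case by (simp add: continuous_on_add)
next
  case (Suc k)
  have "Ck k U (pd i (\<lambda>q. f q + g q))" if "i < 2" for i
  proof (rule Ck_cong[OF assms])
    show "Ck k U (\<lambda>q. pd i f q + pd i g q)"
      using Suc.IH Suc.prems that by simp
    show "pd i f q + pd i g q = pd i (\<lambda>q. f q + g q) q" if "q \<in> U" for q
      using pd_add Ck_Suc_differentiable_at[OF assms _ that] Suc.prems by metis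
  qed
  then show ?case
    using Suc.prems by (simp add: differentiable_on_add)
qed

lemma Ck_bilinear:
  assumes "open U" "bounded_bilinear B"
  shows "Ck k U f \<Longrightarrow> Ck k U g \<Longrightarrow> Ck k U (\<lambda>q. B (f q) (g q))"
proof (induction k arbitrary: f g)
  case 0
  then show ?case using bounded_bilinear.continuous_on[OF assms(2)] by simp
next
  case (Suc k)
  note diff = Ck_Suc_differentiable_at[OF assms(1)]
  have "Ck k U (pd i (\<lambda>q. B (f q) (g q)))" if "i < 2" for i
  proof (rule Ck_cong[OF assms(1)])
    show "Ck k U (\<lambda>q. B (f q) (pd i g q) + B (pd i f q) (g q))"
      using Ck_add[OF assms(1)] Suc.IH[of f "pd i g"] Suc.IH[of "pd i f" g]
        Ck_SucD[of k U f] Ck_SucD[of k U g] Suc.prems that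
      by simp
    show "B (f q) (pd i g q) + B (pd i f q) (g q) = pd i (\<lambda>q. B (f q) (g q)) q" if "q \<in> U" for q
      using pd_bilinear[OF assms(2) diff[OF Suc.prems(1) that] diff[OF Suc.prems(2) that]] by simp
  qed
  moreover have "(\<lambda>q. B (f q) (g q)) differentiable_on U"
    unfolding differentiable_on_eq_differentiable_at[OF assms(1)]
    using differentiable_bilinear[OF assms(2)] diff[OF Suc.prems(1)] diff[OF Suc.prems(2)] by blast
  ultimately show ?case by simp
qed

lemma Ck_inverse:
  fixes f :: "real \<times> real \<Rightarrow> real"
  assumes "open U" "\<And>q. q \<in> U \<Longrightarrow> f q \<noteq> 0"
  shows "Ck k U f \<Longrightarrow> Ck k U (\<lambda>q. inverse (f q))"
proof (induction k)
  case 0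
  then show ?case using assms(2) by (auto intro!: continuous_on_inverse)
next
  case (Suc k)
  note diff = Ck_Suc_differentiable_at[OF assms(1) Suc.prems]
  have mult: "Ck k U a \<Longrightarrow> Ck k U b \<Longrightarrow> Ck k U (\<lambda>q. a q * b q)" for a b :: "real \<times> real \<Rightarrow> real"
    using Ck_bilinear[OF assms(1) bounded_bilinear_mult] by blast
  have inv: "Ck k U (\<lambda>q. inverse (f q))"
    using Suc.IH Suc.prems Ck_SucD by blast
  have "Ck k U (pd i (\<lambda>q. inverse (f q)))" if "i < 2" for i
  proof (rule Ck_cong[OF assms(1)])
    show "Ck k U (\<lambda>q. (-1) * (pd i f q * inverse (f q) * inverse (f q)))"
      using mult[OF Ck_const mult[OF mult[OF Ck_pd[OF Suc.prems] inv] inv]] by blast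
    show "(-1) * (pd i f q * inverse (f q) * inverse (f q)) = pd i (\<lambda>q. inverse (f q)) q"
      if "q \<in> U" for q
      using pd_inverse[OF diff[OF that] assms(2)[OF that]] by simp
  qed
  moreover have "(\<lambda>q. inverse (f q)) differentiable_on U"
    using diff assms(2) by (simp add: differentiable_on_eq_differentiable_at[OF assms(1)])
  ultimately show ?case by simp
qed

lemma Cinf_on_Ck: "Cinf_on U f \<Longrightarrow> Ck k U f"
  unfolding Cinf_on_def by blast

lemma Cinf_on_pd: "Cinf_on U f \<Longrightarrow> Cinf_on U (pd i f)"
  unfolding Cinf_on_def using Ck_pd by blast

lemma Cinf_on_differentiable_at: "open U \<Longrightarrow> Cinf_on U f \<Longrightarrow> p \<in> U \<Longrightarrow> f differentiable (at p)"
  unfolding Cinf_on_def using Ck_Suc_differentiable_at by blast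

lemma Cinf_on_cong:
  fixes f g :: "real \<times> real \<Rightarrow> 'b::real_normed_vector"
  shows "open U \<Longrightarrow> Cinf_on U f \<Longrightarrow> (\<And>q. q \<in> U \<Longrightarrow> f q = g q) \<Longrightarrow> Cinf_on U g"
  unfolding Cinf_on_def using Ck_cong by blast

lemma Cinf_on_const: "Cinf_on U (\<lambda>q. c)"
  unfolding Cinf_on_def using Ck_const by blast

lemma Cinf_on_add:
  fixes f g :: "real \<times> real \<Rightarrow> 'b::real_normed_vector"
  shows "open U \<Longrightarrow> Cinf_on U f \<Longrightarrow> Cinf_on U g \<Longrightarrow> Cinf_on U (\<lambda>q. f q + g q)"
  unfolding Cinf_on_def using Ck_add by blast

lemma Cinf_on_bilinear:
  "open U \<Longrightarrow> bounded_bilinear B \<Longrightarrow> Cinf_on U f \<Longrightarrow> Cinf_on U g \<Longrightarrow> Cinf_on U (\<lambda>q. B (f q) (g q))"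
  unfolding Cinf_on_def using Ck_bilinear by blast

lemma Cinf_on_inverse:
  fixes f :: "real \<times> real \<Rightarrow> real"
  shows "open U \<Longrightarrow> (\<And>q. q \<in> U \<Longrightarrow> f q \<noteq> 0) \<Longrightarrow> Cinf_on U f \<Longrightarrow> Cinf_on U (\<lambda>q. inverse (f q))"
  unfolding Cinf_on_def using Ck_inverse by blast

lemma sum_lessThan_2: "(\<Sum>i<2. f i) = f 0 + f (1::nat)"
  by (simp add: numeral_2_eq_2)

section \<open>Symmetry of second partial derivatives\<close>

lemma norm_cbasis [simp]: "norm (cbasis i) = 1"
  by (simp add: cbasis_def)

lemma has_real_derivative_along_axis:
  fixes f :: "real \<times> real \<Rightarrow> real"
  assumes "f differentiable (at (q + s *\<^sub>R cbasis i))"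
  shows "((\<lambda>s. f (q + s *\<^sub>R cbasis i)) has_real_derivative pd i f (q + s *\<^sub>R cbasis i)) (at s)"
proof -
  obtain D where D: "(f has_derivative D) (at (q + s *\<^sub>R cbasis i))"
    using assms unfolding differentiable_def by blast
  have line: "((\<lambda>s. q + s *\<^sub>R cbasis i) has_derivative (\<lambda>h. h *\<^sub>R cbasis i)) (at s)"
    by (auto intro!: derivative_eq_intros)
  have "((\<lambda>s. f (q + s *\<^sub>R cbasis i)) has_derivative (\<lambda>h. D (h *\<^sub>R cbasis i))) (at s)"
    using has_derivative_compose[OF line D] by (simp add: o_def)
  moreover have "(\<lambda>h. D (h *\<^sub>R cbasis i)) = (*) (pd i f (q + s *\<^sub>R cbasis i))"
    using linear.scaleR[OF has_derivative_linear[OF D]] pd_has_derivative[OF D]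
    by (simp add: fun_eq_iff mult.commute)
  ultimately show ?thesis
    by (simp add: has_field_derivative_def)
qed

lemma mvt_along_axis:
  fixes f :: "real \<times> real \<Rightarrow> real"
  assumes "0 < h" "\<And>s. 0 \<le> s \<Longrightarrow> s \<le> h \<Longrightarrow> f differentiable (at (q + s *\<^sub>R cbasis i))"
  shows "\<exists>s. 0 < s \<and> s < h \<and> f (q + h *\<^sub>R cbasis i) - f q = h * pd i f (q + s *\<^sub>R cbasis i)"
  using MVT2[OF assms(1) has_real_derivative_along_axis[OF assms(2)]] by simp

lemma pd_difference_shift:
  fixes f :: "real \<times> real \<Rightarrow> real"
  assumes "f differentiable (at (y + c))" "f differentiable (at y)"
  shows "pd i (\<lambda>x. f (x + c) - f x) y = pd i f (y + c) - pd i f y"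
    and "(\<lambda>x. f (x + c) - f x) differentiable (at y)"
proof -
  obtain D where D: "(f has_derivative D) (at (y + c))"
    using assms unfolding differentiable_def by blast
  obtain E where E: "(f has_derivative E) (at y)"
    using assms unfolding differentiable_def by blast
  have "((\<lambda>x. x + c) has_derivative (\<lambda>h. h)) (at y)"
    by (auto intro!: derivative_eq_intros)
  from has_derivative_compose[OF this D]
  have "((\<lambda>x. f (x + c) - f x) has_derivative (\<lambda>h. D h - E h)) (at y)"
    by (rule has_derivative_diff[OF _ E, unfolded o_def])
  then show "pd i (\<lambda>x. f (x + c) - f x) y = pd i f (y + c) - pd i f y"
    and "(\<lambda>x. f (x + c) - f x) differentiable (at y)"
    using pd_has_derivative[OF D] pd_has_derivative[OF E]
    by (auto simp: pd_has_derivative differentiable_def)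
qed

lemma second_difference_mvt:
  fixes f :: "real \<times> real \<Rightarrow> real"
  assumes h: "0 < h"
    and diff: "\<And>s t. 0 \<le> s \<Longrightarrow> s \<le> h \<Longrightarrow> 0 \<le> t \<Longrightarrow> t \<le> h \<Longrightarrow>
      f differentiable (at (p + s *\<^sub>R cbasis i + t *\<^sub>R cbasis j)) \<and>
      pd i f differentiable (at (p + s *\<^sub>R cbasis i + t *\<^sub>R cbasis j))"
  shows "\<exists>s t. 0 < s \<and> s < h \<and> 0 < t \<and> t < h \<and>
    f (p + h *\<^sub>R cbasis i + h *\<^sub>R cbasis j) - f (p + h *\<^sub>R cbasis i) - f (p + h *\<^sub>R cbasis j) + f p
      = h * h * pd j (pd i f) (p + s *\<^sub>R cbasis i + t *\<^sub>R cbasis j)"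
proof -
  define F where "F x = f (x + h *\<^sub>R cbasis j) - f x" for x
  have pd_F: "pd i F (p + s *\<^sub>R cbasis i)
      = pd i f (p + s *\<^sub>R cbasis i + h *\<^sub>R cbasis j) - pd i f (p + s *\<^sub>R cbasis i)"
    and diff_F: "F differentiable (at (p + s *\<^sub>R cbasis i))" if "0 \<le> s" "s \<le> h" for s
  proof -
    have "f differentiable (at (p + s *\<^sub>R cbasis i + h *\<^sub>R cbasis j))"
      using diff[of s h] that h by simp
    moreover have "f differentiable (at (p + s *\<^sub>R cbasis i))"
      using diff[of s 0] that h by simp
    ultimately show "pd i F (p + s *\<^sub>R cbasis i)
        = pd i f (p + s *\<^sub>R cbasis i + h *\<^sub>R cbasis j) - pd i f (p + s *\<^sub>R cbasis i)"
      and "F differentiable (at (p + s *\<^sub>R cbasis i))"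
      using pd_difference_shift unfolding F_def[abs_def] by blast+
  qed
  obtain s where s: "0 < s" "s < h" "F (p + h *\<^sub>R cbasis i) - F p = h * pd i F (p + s *\<^sub>R cbasis i)"
    using mvt_along_axis[OF h diff_F] by blast
  have "pd i f differentiable (at (p + s *\<^sub>R cbasis i + t *\<^sub>R cbasis j))" if "0 \<le> t" "t \<le> h" for t
    using diff[of s t] s that by simp
  then obtain t where t: "0 < t" "t < h"
    "pd i f (p + s *\<^sub>R cbasis i + h *\<^sub>R cbasis j) - pd i f (p + s *\<^sub>R cbasis i)
      = h * pd j (pd i f) (p + s *\<^sub>R cbasis i + t *\<^sub>R cbasis j)"
    using mvt_along_axis[OF h, of "pd i f" "p + s *\<^sub>R cbasis i" j] by blast
  have "f (p + h *\<^sub>R cbasis i + h *\<^sub>R cbasis j) - f (p + h *\<^sub>R cbasis i) - f (p + h *\<^sub>R cbasis j) + f p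
      = F (p + h *\<^sub>R cbasis i) - F p"
    by (simp add: F_def algebra_simps)
  also have "\<dots> = h * h * pd j (pd i f) (p + s *\<^sub>R cbasis i + t *\<^sub>R cbasis j)"
    using s(3) pd_F[of s] t(3) s(1,2) by simp
  finally show ?thesis using s t by blast
qed

lemma dist_along_axes: "dist (p + s *\<^sub>R cbasis i + t *\<^sub>R cbasis j) p \<le> \<bar>s\<bar> + \<bar>t\<bar>"
  using norm_triangle_ineq[of "s *\<^sub>R cbasis i" "t *\<^sub>R cbasis j"] by (simp add: dist_norm add.assoc)

lemma mixed_pds_meet_in_ball:
  fixes f :: "real \<times> real \<Rightarrow> real"
  assumes U: "open U" and C: "Ck 2 U f" and d: "0 < d" "ball p d \<subseteq> U"
  shows "\<exists>x y. dist x p < d \<and> dist y p < d \<and> pd 1 (pd 0 f) x = pd 0 (pd 1 f) y"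
proof -
  define h where "h = d / 3"
  have h: "h > 0" using d by (simp add: h_def)
  have near: "dist (p + s *\<^sub>R cbasis i + t *\<^sub>R cbasis j) p < d"
    if "0 \<le> s" "s \<le> h" "0 \<le> t" "t \<le> h" for s t i j
    using dist_along_axes[of p s i t j] that d(1) by (simp add: h_def)
  have "f differentiable (at q) \<and> pd i f differentiable (at q)" if "q \<in> U" "i < 2" for q i
    using C that U by (simp add: numeral_2_eq_2 differentiable_on_eq_differentiable_at)
  moreover have "p + s *\<^sub>R cbasis i + t *\<^sub>R cbasis j \<in> U"
    if "0 \<le> s" "s \<le> h" "0 \<le> t" "t \<le> h" for s t i j
    using near[OF that, of i j] d(2) by (auto simp: dist_commute)
  ultimately have square: "\<And>s t. 0 \<le> s \<Longrightarrow> s \<le> h \<Longrightarrow> 0 \<le> t \<Longrightarrow> t \<le> h \<Longrightarrow>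
      f differentiable (at (p + s *\<^sub>R cbasis i + t *\<^sub>R cbasis j)) \<and>
      pd i f differentiable (at (p + s *\<^sub>R cbasis i + t *\<^sub>R cbasis j))" if "i < 2" for i j
    using that by blast
  have "\<exists>s t. 0 < s \<and> s < h \<and> 0 < t \<and> t < h \<and>
    f (p + h *\<^sub>R cbasis 0 + h *\<^sub>R cbasis 1) - f (p + h *\<^sub>R cbasis 0) - f (p + h *\<^sub>R cbasis 1) + f p
      = h * h * pd 1 (pd 0 f) (p + s *\<^sub>R cbasis 0 + t *\<^sub>R cbasis 1)"
    by (rule second_difference_mvt[OF h]) (simp add: square)
  then obtain s1 t1 where st1: "0 < s1" "s1 < h" "0 < t1" "t1 < h"
    "f (p + h *\<^sub>R cbasis 0 + h *\<^sub>R cbasis 1) - f (p + h *\<^sub>R cbasis 0) - f (p + h *\<^sub>R cbasis 1) + f p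
      = h * h * pd 1 (pd 0 f) (p + s1 *\<^sub>R cbasis 0 + t1 *\<^sub>R cbasis 1)"
    by blast
  have "\<exists>s t. 0 < s \<and> s < h \<and> 0 < t \<and> t < h \<and>
    f (p + h *\<^sub>R cbasis 1 + h *\<^sub>R cbasis 0) - f (p + h *\<^sub>R cbasis 1) - f (p + h *\<^sub>R cbasis 0) + f p
      = h * h * pd 0 (pd 1 f) (p + s *\<^sub>R cbasis 1 + t *\<^sub>R cbasis 0)"
    by (rule second_difference_mvt[OF h]) (simp add: square)
  then obtain s2 t2 where st2: "0 < s2" "s2 < h" "0 < t2" "t2 < h"
    "f (p + h *\<^sub>R cbasis 1 + h *\<^sub>R cbasis 0) - f (p + h *\<^sub>R cbasis 1) - f (p + h *\<^sub>R cbasis 0) + f p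
      = h * h * pd 0 (pd 1 f) (p + s2 *\<^sub>R cbasis 1 + t2 *\<^sub>R cbasis 0)"
    by blast
  have swap: "p + h *\<^sub>R cbasis 1 + h *\<^sub>R cbasis 0 = p + h *\<^sub>R cbasis 0 + h *\<^sub>R cbasis 1"
    by (simp only: add.assoc add.commute[of "h *\<^sub>R cbasis 1"])
  have "h * h * pd 1 (pd 0 f) (p + s1 *\<^sub>R cbasis 0 + t1 *\<^sub>R cbasis 1)
      = h * h * pd 0 (pd 1 f) (p + s2 *\<^sub>R cbasis 1 + t2 *\<^sub>R cbasis 0)"
    using st1(5) st2(5)[unfolded swap] by linarith
  then show ?thesis
    using h near[of s1 t1 0 1] near[of s2 t2 1 0] st1(1-4) st2(1-4) by fastforce
qed

lemma pd_commute_real: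
  fixes f :: "real \<times> real \<Rightarrow> real"
  assumes U: "open U" "p \<in> U" and C: "Ck 2 U f"
  shows "pd 1 (pd 0 f) p = pd 0 (pd 1 f) p"
proof (rule ccontr)
  define D1 where "D1 = pd 1 (pd 0 f)"
  define D2 where "D2 = pd 0 (pd 1 f)"
  assume "pd 1 (pd 0 f) p \<noteq> pd 0 (pd 1 f) p"
  then have e: "\<bar>D1 p - D2 p\<bar> / 2 > 0" by (simp add: D1_def D2_def)
  have "continuous_on U D1" "continuous_on U D2"
    using C by (simp_all add: numeral_2_eq_2 D1_def D2_def)
  then have "isCont D1 p" "isCont D2 p"
    using U continuous_on_eq_continuous_at by blast+
  then obtain d1 d2 where
    d1: "d1 > 0" "\<forall>x. dist x p < d1 \<longrightarrow> dist (D1 x) (D1 p) < \<bar>D1 p - D2 p\<bar> / 2" and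
    d2: "d2 > 0" "\<forall>x. dist x p < d2 \<longrightarrow> dist (D2 x) (D2 p) < \<bar>D1 p - D2 p\<bar> / 2"
    using e unfolding continuous_at_eps_delta by blast
  obtain d0 where d0: "d0 > 0" "ball p d0 \<subseteq> U"
    using U open_contains_ball by blast
  have "ball p (min d0 (min d1 d2)) \<subseteq> U"
    using d0(2) by auto
  then have "\<exists>x y. dist x p < min d0 (min d1 d2) \<and> dist y p < min d0 (min d1 d2) \<and> D1 x = D2 y"
    unfolding D1_def D2_def using d0(1) d1(1) d2(1) by (intro mixed_pds_meet_in_ball[OF U(1) C]) simp_all
  then obtain x y where "dist x p < min d0 (min d1 d2)" "dist y p < min d0 (min d1 d2)" "D1 x = D2 y"
    by blast
  moreover have "dist (D1 x) (D1 p) < \<bar>D1 p - D2 p\<bar> / 2" "dist (D2 y) (D2 p) < \<bar>D1 p - D2 p\<bar> / 2"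
    using calculation d1(2)[rule_format, of x] d2(2)[rule_format, of y] by simp_all
  ultimately show False
    by (simp add: dist_real_def abs_if split: if_splits)
qed

lemma pd_inner_const:
  fixes f :: "real \<times> real \<Rightarrow> 'b::real_inner"
  assumes "f differentiable (at p)"
  shows "pd i (\<lambda>q. f q \<bullet> b) p = pd i f p \<bullet> b"
  using pd_bilinear[OF bounded_bilinear_inner assms, of "\<lambda>q. b" i] by simp

lemma pd_commute:
  fixes f :: "real \<times> real \<Rightarrow> 'b::euclidean_space"
  assumes U: "open U" "p \<in> U" and C: "Ck 2 U f"
  shows "pd i (pd j f) p = pd j (pd i f) p"
proof -
  have "pd 1 (pd 0 f) p \<bullet> b = pd 0 (pd 1 f) p \<bullet> b" if "b \<in> Basis" for b :: 'b
  proof -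
    have C1: "Ck (Suc 0) U (pd i f)" for i
      using C Ck_pd[of "Suc 0" U f i] by (simp add: numeral_2_eq_2)
    have df: "f differentiable (at q)" if "q \<in> U" for q
      using C U(1) that by (simp add: numeral_2_eq_2 differentiable_on_eq_differentiable_at)
    have "pd j (pd i (\<lambda>q. f q \<bullet> b)) p = pd j (pd i f) p \<bullet> b" for i j
    proof -
      have "pd j (pd i (\<lambda>q. f q \<bullet> b)) p = pd j (\<lambda>q. pd i f q \<bullet> b) p"
        using pd_inner_const[OF df] by (intro pd_cong_open[OF U]) simp
      also have "\<dots> = pd j (pd i f) p \<bullet> b"
        by (rule pd_inner_const[OF Ck_Suc_differentiable_at[OF U(1) C1 U(2)]])
      finally show ?thesis .
    qed
    moreover have "pd 1 (pd 0 (\<lambda>q. f q \<bullet> b)) p = pd 0 (pd 1 (\<lambda>q. f q \<bullet> b)) p"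
      by (rule pd_commute_real[OF U Ck_bilinear[OF U(1) bounded_bilinear_inner C Ck_const]])
    ultimately show ?thesis
      by simp
  qed
  then have "pd 1 (pd 0 f) p = pd 0 (pd 1 f) p"
    by (rule euclidean_eqI)
  then show ?thesis
    by (cases "i = 0"; cases "j = 0") (simp_all add: pd_index_nonzero[of i] pd_index_nonzero[of j])
qed

section \<open>The Lorentz form\<close>

lemma lor_eq_inner: "lor x y = (- fst x, snd x) \<bullet> y"
  by (simp add: lor_def inner_prod_def)

lemma bounded_bilinear_lor: "bounded_bilinear (lor :: 'n::finite mink \<Rightarrow> _)"
proof -
  have "bounded_linear (\<lambda>x::'n mink. (- fst x, snd x))"
    by (intro bounded_linear_Pair bounded_linear_minus bounded_linear_fst bounded_linear_snd)
  then have "bounded_bilinear (\<lambda>x y :: 'n mink. (- fst x, snd x) \<bullet> y)"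
    using bounded_bilinear.comp1[OF bounded_bilinear_inner] by blast
  then show ?thesis
    unfolding lor_eq_inner[abs_def] .
qed

lemma lor_commute: "lor x y = lor y x"
  by (simp add: lor_def inner_commute)

lemma lor_add_left: "lor (x + y) z = lor x z + lor y z"
  and lor_add_right: "lor z (x + y) = lor z x + lor z y"
  and lor_diff_left: "lor (x - y) z = lor x z - lor y z"
  and lor_diff_right: "lor z (x - y) = lor z x - lor z y"
  and lor_scaleR_left: "lor (c *\<^sub>R x) z = c * lor x z"
  and lor_scaleR_right: "lor z (c *\<^sub>R x) = c * lor z x"
  and lor_zero_left: "lor 0 z = 0"
  and lor_zero_right: "lor z 0 = 0"
  and lor_minus_left: "lor (- x) z = - lor x z"
  and lor_minus_right: "lor z (- x) = - lor z x"
  by (simp_all add: lor_def algebra_simps inner_add_left inner_add_right inner_diff_left inner_diff_right)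

lemmas lor_simps = lor_add_left lor_add_right lor_diff_left lor_diff_right lor_scaleR_left
  lor_scaleR_right lor_zero_left lor_zero_right lor_minus_left lor_minus_right


section \<open>Nondegenerate charts: the Gauss formula and the Gauss equation\<close>

text \<open>Keep the index 1 a numeral, so that it matches terms such as \<open>pd 1 X\<close> and \<open>gm X 1 1\<close>.\<close>
declare One_nat_def [simp del]

locale nondegenerate_chart =
  fixes U :: "(real \<times> real) set" and X :: "real \<times> real \<Rightarrow> 'n::finite mink"
  assumes open_U: "open U" and smooth_X: "Cinf_on U X"
    and detg_nonzero: "\<And>q. q \<in> U \<Longrightarrow> detg X q \<noteq> 0"
begin

lemma smooth_pd: "Cinf_on U f \<Longrightarrow> Cinf_on U (pd i f)"
  by (rule Cinf_on_pd)

lemma smooth_const: "Cinf_on U (\<lambda>q. c)"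
  by (rule Cinf_on_const)

lemma smooth_add: "Cinf_on U f \<Longrightarrow> Cinf_on U g \<Longrightarrow> Cinf_on U (\<lambda>q. f q + g q)"
  for f g :: "real \<times> real \<Rightarrow> 'b::real_normed_vector"
  by (rule Cinf_on_add[OF open_U])

lemma smooth_lor: "Cinf_on U f \<Longrightarrow> Cinf_on U g \<Longrightarrow> Cinf_on U (\<lambda>q. lor (f q) (g q))"
  for f g :: "real \<times> real \<Rightarrow> 'm::finite mink"
  by (rule Cinf_on_bilinear[OF open_U bounded_bilinear_lor])

lemma smooth_mult: "Cinf_on U f \<Longrightarrow> Cinf_on U g \<Longrightarrow> Cinf_on U (\<lambda>q. f q * g q)"
  for f g :: "real \<times> real \<Rightarrow> real"
  by (rule Cinf_on_bilinear[OF open_U bounded_bilinear_mult])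

lemma smooth_scaleR: "Cinf_on U f \<Longrightarrow> Cinf_on U g \<Longrightarrow> Cinf_on U (\<lambda>q. f q *\<^sub>R g q)"
  for f :: "real \<times> real \<Rightarrow> real" and g :: "real \<times> real \<Rightarrow> 'b::real_normed_vector"
  by (rule Cinf_on_bilinear[OF open_U bounded_bilinear_scaleR])

lemma smooth_minus: "Cinf_on U f \<Longrightarrow> Cinf_on U (\<lambda>q. - f q)"
  for f :: "real \<times> real \<Rightarrow> 'b::real_normed_vector"
  using smooth_scaleR[OF smooth_const[of "-1"], of f] by simp

lemma smooth_diff: "Cinf_on U f \<Longrightarrow> Cinf_on U g \<Longrightarrow> Cinf_on U (\<lambda>q. f q - g q)"
  for f g :: "real \<times> real \<Rightarrow> 'b::real_normed_vector"
  using smooth_add[of f "\<lambda>q. - g q"] smooth_minus[of g] by simp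

lemma smooth_divide:
  fixes f g :: "real \<times> real \<Rightarrow> real"
  assumes "\<And>q. q \<in> U \<Longrightarrow> g q \<noteq> 0" "Cinf_on U f" "Cinf_on U g"
  shows "Cinf_on U (\<lambda>q. f q / g q)"
  using smooth_mult[OF assms(2) Cinf_on_inverse[OF open_U assms(1,3)]] by (simp add: divide_inverse)

lemma smooth_cong: "Cinf_on U f \<Longrightarrow> (\<And>q. q \<in> U \<Longrightarrow> f q = g q) \<Longrightarrow> Cinf_on U g"
  for f g :: "real \<times> real \<Rightarrow> 'b::real_normed_vector"
  by (rule Cinf_on_cong[OF open_U])

lemmas smooth_intros = smooth_pd smooth_const smooth_add smooth_lor smooth_mult smooth_scaleR
  smooth_minus smooth_diff smooth_X

lemma smooth_differentiable: "Cinf_on U f \<Longrightarrow> q \<in> U \<Longrightarrow> f differentiable (at q)"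
  by (rule Cinf_on_differentiable_at[OF open_U])

lemma pd_local: "q \<in> U \<Longrightarrow> (\<And>q. q \<in> U \<Longrightarrow> f q = g q) \<Longrightarrow> pd i f q = pd i g q"
  by (rule pd_cong_open[OF open_U])

lemma pd_vanishing: "q \<in> U \<Longrightarrow> (\<And>q. q \<in> U \<Longrightarrow> f q = 0) \<Longrightarrow> pd i f q = 0"
  using pd_local[of q f "\<lambda>q. 0"] by simp

lemma pd_plus: "Cinf_on U f \<Longrightarrow> Cinf_on U g \<Longrightarrow> q \<in> U \<Longrightarrow>
    pd i (\<lambda>q. f q + g q) q = pd i f q + pd i g q"
  for f g :: "real \<times> real \<Rightarrow> 'b::real_normed_vector"
  by (rule pd_add[OF smooth_differentiable smooth_differentiable])

lemma pd_lor: "Cinf_on U f \<Longrightarrow> Cinf_on U g \<Longrightarrow> q \<in> U \<Longrightarrow>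
    pd i (\<lambda>q. lor (f q) (g q)) q = lor (f q) (pd i g q) + lor (pd i f q) (g q)"
  for f g :: "real \<times> real \<Rightarrow> 'm::finite mink"
  using pd_bilinear[OF bounded_bilinear_lor smooth_differentiable smooth_differentiable] by simp

lemma pd_times: "Cinf_on U f \<Longrightarrow> Cinf_on U g \<Longrightarrow> q \<in> U \<Longrightarrow>
    pd i (\<lambda>q. f q * g q) q = f q * pd i g q + pd i f q * g q"
  for f g :: "real \<times> real \<Rightarrow> real"
  using pd_bilinear[OF bounded_bilinear_mult smooth_differentiable smooth_differentiable] by simp

lemma pd_scale: "Cinf_on U f \<Longrightarrow> Cinf_on U g \<Longrightarrow> q \<in> U \<Longrightarrow>
    pd i (\<lambda>q. f q *\<^sub>R g q) q = f q *\<^sub>R pd i g q + pd i f q *\<^sub>R g q"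
  for f :: "real \<times> real \<Rightarrow> real" and g :: "real \<times> real \<Rightarrow> 'b::real_normed_vector"
  using pd_bilinear[OF bounded_bilinear_scaleR smooth_differentiable smooth_differentiable] by simp

lemma pd_minus: "Cinf_on U f \<Longrightarrow> Cinf_on U g \<Longrightarrow> q \<in> U \<Longrightarrow>
    pd i (\<lambda>q. f q - g q) q = pd i f q - pd i g q"
  for f g :: "real \<times> real \<Rightarrow> 'b::real_normed_vector"
  using pd_plus[of f "\<lambda>q. - g q" q i] smooth_minus[of g]
    pd_scale[OF smooth_const[of "-1"], of g q i] by simp

lemma pd_swap: "Cinf_on U f \<Longrightarrow> q \<in> U \<Longrightarrow> pd i (pd j f) q = pd j (pd i f) q"
  for f :: "real \<times> real \<Rightarrow> 'b::euclidean_space"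
  by (rule pd_commute[OF open_U _ Cinf_on_Ck])

lemma smooth_gm: "Cinf_on U (gm X i j)"
  unfolding gm_def[abs_def] by (intro smooth_intros)

lemma lor_pd_X_pd_X: "lor (pd i X q) (pd j X q) = gm X i j q"
  by (simp add: gm_def)

lemma gm_commute: "gm X i j q = gm X j i q"
  by (simp add: gm_def lor_commute)

lemma ginv_explicit:
  "ginv X 0 0 q = gm X 1 1 q / detg X q" "ginv X 1 1 q = gm X 0 0 q / detg X q"
  "ginv X 0 1 q = - gm X 0 1 q / detg X q" "ginv X 1 0 q = - gm X 0 1 q / detg X q"
  "detg X q = gm X 0 0 q * gm X 1 1 q - gm X 0 1 q * gm X 0 1 q"
  by (simp_all add: ginv_def detg_def gm_commute[of 1 0])

lemma smooth_ginv: "Cinf_on U (ginv X i j)"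
proof -
  have "(\<lambda>q. if i = 0 \<and> j = 0 then gm X 1 1 q else if i = 1 \<and> j = 1 then gm X 0 0 q
      else - gm X i j q)
    = (if i = 0 \<and> j = 0 then gm X 1 1 else if i = 1 \<and> j = 1 then gm X 0 0 else (\<lambda>q. - gm X i j q))"
    by auto
  moreover have "Cinf_on U \<dots>"
    by (simp only: split: if_split) (simp add: smooth_gm smooth_minus)
  moreover have "Cinf_on U (detg X)"
    unfolding detg_def[abs_def] by (intro smooth_intros smooth_gm)
  ultimately show ?thesis
    unfolding ginv_def[abs_def] by (intro smooth_divide[OF detg_nonzero]) simp_all
qed

lemma lor_pd_X_index: "lor v (pd 0 X q) = 0 \<Longrightarrow> lor v (pd 1 X q) = 0 \<Longrightarrow> lor v (pd m X q) = 0"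
  by (cases "m = 0") (simp_all add: pd_index_nonzero[of m])

lemma tanp_expand: "tanp X v q
  = (ginv X 0 0 q * lor v (pd 0 X q) + ginv X 0 1 q * lor v (pd 1 X q)) *\<^sub>R pd 0 X q
  + (ginv X 1 0 q * lor v (pd 0 X q) + ginv X 1 1 q * lor v (pd 1 X q)) *\<^sub>R pd 1 X q"
  by (simp add: tanp_def sum_lessThan_2 scaleR_add_left)

lemma lor_tanp_pd:
  assumes q: "q \<in> U"
  shows "lor (tanp X v q) (pd m X q) = lor v (pd m X q)"
proof -
  have "lor (tanp X v q - v) (pd m X q) = 0"
  proof (rule lor_pd_X_index)
    have d: "gm X 0 0 q * gm X 1 1 q - gm X 0 1 q * gm X 0 1 q \<noteq> 0"
      using detg_nonzero[OF q] by (simp add: ginv_explicit)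
    show "lor (tanp X v q - v) (pd 0 X q) = 0" "lor (tanp X v q - v) (pd 1 X q) = 0"
      using d unfolding tanp_expand ginv_explicit
      by (simp_all add: lor_simps gm_def[symmetric] gm_commute[of 1 0] divide_simps) algebra+
  qed
  then show ?thesis by (simp add: lor_simps)
qed

lemma tangent_coords_eq_0:
  assumes q: "q \<in> U" and "lor (a *\<^sub>R pd 0 X q + b *\<^sub>R pd 1 X q) (pd 0 X q) = 0"
    and "lor (a *\<^sub>R pd 0 X q + b *\<^sub>R pd 1 X q) (pd 1 X q) = 0"
  shows "a = 0 \<and> b = 0"
proof -
  have "a * gm X 0 0 q + b * gm X 0 1 q = 0" "a * gm X 0 1 q + b * gm X 1 1 q = 0"
    using assms(2,3) by (simp_all add: lor_simps gm_def[symmetric] gm_commute[of 1 0])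
  then have "a * detg X q = 0" "b * detg X q = 0"
    unfolding ginv_explicit(5) by algebra+
  then show ?thesis
    using detg_nonzero[OF q] by simp
qed

lemma span_pd_X_obtain: "w \<in> span {pd 0 X q, pd 1 X q} \<Longrightarrow> \<exists>a b. w = a *\<^sub>R pd 0 X q + b *\<^sub>R pd 1 X q"
  by (auto simp: span_breakdown_eq span_singleton) (metis add.commute diff_add_cancel)

lemma tanp_tangent:
  assumes q: "q \<in> U"
  shows "tanp X (a *\<^sub>R pd 0 X q + b *\<^sub>R pd 1 X q) q = a *\<^sub>R pd 0 X q + b *\<^sub>R pd 1 X q"
proof -
  let ?w = "a *\<^sub>R pd 0 X q + b *\<^sub>R pd 1 X q"
  obtain c0 c1 where c: "tanp X ?w q = c0 *\<^sub>R pd 0 X q + c1 *\<^sub>R pd 1 X q"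
    using tanp_expand by blast
  have "lor ((c0 - a) *\<^sub>R pd 0 X q + (c1 - b) *\<^sub>R pd 1 X q) (pd m X q) = 0" for m
    using lor_tanp_pd[OF q, of ?w m] c by (simp add: lor_simps algebra_simps)
  then have "c0 - a = 0 \<and> c1 - b = 0"
    using tangent_coords_eq_0[OF q] by blast
  then show ?thesis
    using c by simp
qed

lemma smooth_chr: "Cinf_on U (chr X k i j)"
  unfolding chr_def[abs_def] sum_lessThan_2 by (intro smooth_intros smooth_ginv smooth_gm)

lemma smooth_sff: "Cinf_on U (sff X i j)"
  unfolding sff_def[abs_def] norp_def tanp_expand by (intro smooth_intros smooth_ginv)

lemma chr_commute: "chr X k i j q = chr X k j i q"
proof -
  have "gm X i j = gm X j i" by (simp add: fun_eq_iff gm_commute)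
  then show ?thesis by (simp add: chr_def add.commute)
qed

lemma sff_commute: "q \<in> U \<Longrightarrow> sff X i j q = sff X j i q"
  using pd_swap[OF smooth_X] by (simp add: sff_def)

lemma lor_sff_pd_X: "q \<in> U \<Longrightarrow> lor (sff X i j q) (pd m X q) = 0"
  by (simp add: sff_def norp_def lor_diff_left lor_tanp_pd)

lemma christoffel_first_kind:
  assumes q: "q \<in> U"
  shows "lor (pd i (pd j X) q) (pd l X q)
    = 1/2 * (pd i (gm X j l) q + pd j (gm X i l) q - pd l (gm X i j) q)"
proof -
  have "pd a (gm X b c) q = lor (pd b X q) (pd a (pd c X) q) + lor (pd a (pd b X) q) (pd c X q)"
    for a b c
    unfolding gm_def[abs_def] by (rule pd_lor[OF smooth_pd smooth_pd q]) (rule smooth_X)+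
  then show ?thesis
    using pd_swap[OF smooth_X q] by (simp add: lor_commute[of "pd _ X q"])
qed

lemma gauss_formula:
  assumes q: "q \<in> U"
  shows "pd i (pd j X) q = chr X 0 i j q *\<^sub>R pd 0 X q + chr X 1 i j q *\<^sub>R pd 1 X q + sff X i j q"
proof -
  have "chr X k i j q = ginv X k 0 q * lor (pd i (pd j X) q) (pd 0 X q)
      + ginv X k 1 q * lor (pd i (pd j X) q) (pd 1 X q)" for k
    by (simp add: chr_def sum_lessThan_2 christoffel_first_kind[OF q] algebra_simps)
  then show ?thesis
    by (simp add: sff_def norp_def tanp_expand)
qed

lemma lor_pd_pd_X:
  "q \<in> U \<Longrightarrow> lor (pd i (pd j X) q) (pd m X q) = chr X 0 i j q * gm X 0 m q + chr X 1 i j q * gm X 1 m q"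
  by (subst gauss_formula) (simp_all add: lor_simps lor_sff_pd_X gm_def)

lemma lor_sff_pd_pd_X: "q \<in> U \<Longrightarrow> lor (sff X i j q) (pd l (pd m X) q) = lor (sff X i j q) (sff X l m q)"
  by (subst gauss_formula[of q l m]) (simp_all add: lor_simps lor_commute[of _ "sff X i j q"] lor_sff_pd_X)

text \<open>Weingarten: differentiating \<open>\<langle>II_ij, \<partial>_m X\<rangle> = 0\<close>.\<close>
lemma lor_pd_sff:
  assumes q: "q \<in> U"
  shows "lor (pd l (sff X i j) q) (pd m X q) = - lor (sff X i j q) (sff X l m q)"
proof -
  have "pd l (\<lambda>q. lor (sff X i j q) (pd m X q)) q = 0"
    by (rule pd_vanishing[OF q lor_sff_pd_X])
  then show ?thesis
    using pd_lor[OF smooth_sff smooth_pd[OF smooth_X] q, of l i j m] lor_sff_pd_pd_X[OF q] by simp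
qed

lemma lor_pd_pd_pd_X:
  assumes q: "q \<in> U"
  shows "lor (pd l (pd i (pd j X)) q) (pd m X q) =
     chr X 0 i j q * (chr X 0 l 0 q * gm X 0 m q + chr X 1 l 0 q * gm X 1 m q)
   + chr X 1 i j q * (chr X 0 l 1 q * gm X 0 m q + chr X 1 l 1 q * gm X 1 m q)
   + pd l (chr X 0 i j) q * gm X 0 m q + pd l (chr X 1 i j) q * gm X 1 m q
   - lor (sff X i j q) (sff X l m q)"
proof -
  have tangent: "Cinf_on U (\<lambda>q. chr X k i j q *\<^sub>R pd k X q)" for k
    by (intro smooth_intros smooth_chr)
  have "pd l (pd i (pd j X)) q
      = pd l (\<lambda>q. (chr X 0 i j q *\<^sub>R pd 0 X q + chr X 1 i j q *\<^sub>R pd 1 X q) + sff X i j q) q"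
    by (rule pd_local[OF q]) (simp add: gauss_formula)
  also have "\<dots> = chr X 0 i j q *\<^sub>R pd l (pd 0 X) q + pd l (chr X 0 i j) q *\<^sub>R pd 0 X q
      + (chr X 1 i j q *\<^sub>R pd l (pd 1 X) q + pd l (chr X 1 i j) q *\<^sub>R pd 1 X q) + pd l (sff X i j) q"
    using pd_plus[OF smooth_add[OF tangent tangent] smooth_sff q] pd_plus[OF tangent tangent q]
      pd_scale[OF smooth_chr smooth_pd[OF smooth_X] q] by simp
  finally show ?thesis
    using q by (simp add: lor_simps lor_pd_pd_X lor_pd_sff gm_def)
qed

text \<open>Obtained by comparing \<open>\<partial>_0 \<partial>_1 \<partial>_1 X\<close> with \<open>\<partial>_1 \<partial>_0 \<partial>_1 X\<close>.\<close>
lemma gauss_equation: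
  assumes q: "q \<in> U"
  shows "gauss_curv X q * detg X q
    = lor (sff X 1 1 q) (sff X 0 0 q) - lor (sff X 0 1 q) (sff X 1 0 q)"
proof -
  have "lor (pd 0 (pd 1 (pd 1 X)) q) (pd 0 X q) = lor (pd 1 (pd 0 (pd 1 X)) q) (pd 0 X q)"
    using pd_swap[OF smooth_pd[OF smooth_X] q] by simp
  then show ?thesis
    unfolding lor_pd_pd_pd_X[OF q] gauss_curv_def sum_lessThan_2
    using detg_nonzero[OF q] by (simp add: field_simps) algebra
qed

definition hess :: "(real \<times> real \<Rightarrow> real) \<Rightarrow> nat \<Rightarrow> nat \<Rightarrow> real \<times> real \<Rightarrow> real" where
  "hess f i j q = pd i (pd j f) q - (\<Sum>k<2. chr X k i j q * pd k f q)"

lemma lap_eq_hess: "lap X f q = (\<Sum>i<2. \<Sum>j<2. ginv X i j q * hess f i j q)"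
  by (simp add: lap_def hess_def)

lemma hess_commute: "Cinf_on U f \<Longrightarrow> q \<in> U \<Longrightarrow> hess f i j q = hess f j i q"
  unfolding hess_def using pd_swap[of f q i j] chr_commute[of _ i j] by simp

end


section \<open>Charts along which \<open>Z\<^sup>\<top>\<close> is lightlike\<close>

lemma rank_one_of_null_kernel:
  fixes H00 H01 H11 T0 T1 t0 t1 :: real
  assumes "T0 * H00 + T1 * H01 = 0" "T0 * H01 + T1 * H11 = 0" "T0 * t0 + T1 * t1 = 0"
    and "T0 \<noteq> 0 \<or> T1 \<noteq> 0"
  defines "a \<equiv> H00 * t0 * t0 + 2 * H01 * t0 * t1 + H11 * t1 * t1"
  shows "H00 * (t0\<^sup>2 + t1\<^sup>2)\<^sup>2 = a * t0 * t0" "H01 * (t0\<^sup>2 + t1\<^sup>2)\<^sup>2 = a * t0 * t1"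
    "H11 * (t0\<^sup>2 + t1\<^sup>2)\<^sup>2 = a * t1 * t1"
  using assms(4)
  by (auto simp: a_def) (use assms(1-3) in algebra)+

lemma inverse_metric_of_null_frame:
  fixes g00 g01 g11 T0 T1 W0 W1 :: real
  assumes "T0 * T0 * g00 + 2 * T0 * T1 * g01 + T1 * T1 * g11 = 0"
    and "W0 * W0 * g00 + 2 * W0 * W1 * g01 + W1 * W1 * g11 = 0"
    and "T0 * W0 * g00 + (T0 * W1 + T1 * W0) * g01 + T1 * W1 * g11 = -1"
  shows "g11 = - 2 * T0 * W0 * (g00 * g11 - g01 * g01)"
    and "- g01 = - (T0 * W1 + T1 * W0) * (g00 * g11 - g01 * g01)"
    and "g00 = - 2 * T1 * W1 * (g00 * g11 - g01 * g01)"
  using assms by algebra+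

lemma null_coordinate_identity:
  fixes g00 g01 g11 T0 T1 t0 t1 a0 a1 K D :: real
  assumes "T0 * D = g11 * t0 - g01 * t1" "T1 * D = g00 * t1 - g01 * t0" "D = g00 * g11 - g01 * g01"
    and "T0 * t0 + T1 * t1 = 0"
    and "(a0 * t1 - a1 * t0) * t0 = T1 * K * D" "(a0 * t1 - a1 * t0) * t1 = - T0 * K * D"
    and "D \<noteq> 0" "t0 \<noteq> 0 \<or> t1 \<noteq> 0"
  shows "T0 * a0 + T1 * a1 = K"
  using assms(8) by (elim disjE) (use assms(1-7) in algebra)+

locale null_direction_chart = nondegenerate_chart U X
  for U :: "(real \<times> real) set" and X :: "real \<times> real \<Rightarrow> 'n::finite mink" +
  fixes Z :: "'n mink"
  assumes Ztop_lightlike: "\<And>q. q \<in> U \<Longrightarrow> lightlike (Ztop X Z q)"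
begin

definition zdot :: "nat \<Rightarrow> real \<times> real \<Rightarrow> real" where
  "zdot m q = lor (pd m X q) Z"

definition zcoef :: "nat \<Rightarrow> real \<times> real \<Rightarrow> real" where
  "zcoef i q = ginv X i 0 q * zdot 0 q + ginv X i 1 q * zdot 1 q"

definition hZ :: "nat \<Rightarrow> nat \<Rightarrow> real \<times> real \<Rightarrow> real" where
  "hZ k m q = lor (pd k (Ztop X Z) q) (pd m X q)"

lemma Ztop_expand: "Ztop X Z q = zcoef 0 q *\<^sub>R pd 0 X q + zcoef 1 q *\<^sub>R pd 1 X q"
  by (simp add: Ztop_def tanp_expand zcoef_def zdot_def lor_commute)

lemma Zperp_eq: "Zperp X Z q = Z - Ztop X Z q"
  by (simp add: Zperp_def norp_def Ztop_def)

lemma smooth_zdot: "Cinf_on U (zdot m)"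
  unfolding zdot_def[abs_def] by (intro smooth_intros)

lemma smooth_zcoef: "Cinf_on U (zcoef i)"
  unfolding zcoef_def[abs_def] by (intro smooth_intros smooth_ginv smooth_zdot)

lemma smooth_Ztop: "Cinf_on U (Ztop X Z)"
  by (rule smooth_cong[of "\<lambda>q. zcoef 0 q *\<^sub>R pd 0 X q + zcoef 1 q *\<^sub>R pd 1 X q"])
    (auto intro!: smooth_intros smooth_zcoef simp: Ztop_expand)

lemma smooth_hZ: "Cinf_on U (hZ k m)"
  unfolding hZ_def[abs_def] by (intro smooth_intros smooth_Ztop)

lemma lor_Ztop_pd_X: "q \<in> U \<Longrightarrow> lor (Ztop X Z q) (pd m X q) = zdot m q"
  using lor_tanp_pd[of q Z m] lor_commute[of Z] by (simp add: Ztop_def zdot_def)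

lemma lor_Zperp_pd_X: "q \<in> U \<Longrightarrow> lor (Z - Ztop X Z q) (pd m X q) = 0"
  by (simp add: lor_simps lor_Ztop_pd_X zdot_def lor_commute)

lemma Ztop_null: "q \<in> U \<Longrightarrow> lor (Ztop X Z q) (Ztop X Z q) = 0"
  and Ztop_nonzero: "q \<in> U \<Longrightarrow> Ztop X Z q \<noteq> 0"
  using Ztop_lightlike by (simp_all add: lightlike_def)

lemma lor_Ztop_right: "lor v (Ztop X Z q) = zcoef 0 q * lor v (pd 0 X q) + zcoef 1 q * lor v (pd 1 X q)"
  by (simp add: Ztop_expand lor_simps)

lemma zcoef_zdot_orthogonal: "q \<in> U \<Longrightarrow> zcoef 0 q * zdot 0 q + zcoef 1 q * zdot 1 q = 0"
  using Ztop_null lor_Ztop_right[of "Ztop X Z q" q] by (simp add: lor_Ztop_pd_X)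

lemma zcoef_nonzero: "q \<in> U \<Longrightarrow> zcoef 0 q \<noteq> 0 \<or> zcoef 1 q \<noteq> 0"
  using Ztop_nonzero[of q] Ztop_expand[of q] by auto

lemma zdot_nonzero: "q \<in> U \<Longrightarrow> zdot 0 q \<noteq> 0 \<or> zdot 1 q \<noteq> 0"
  using zcoef_nonzero[of q] by (auto simp: zcoef_def)

lemma zdot_sumsq_pos: "q \<in> U \<Longrightarrow> (zdot 0 q)\<^sup>2 + (zdot 1 q)\<^sup>2 > 0"
  using zdot_nonzero[of q] by (auto simp: add_pos_nonneg add_nonneg_pos)

text \<open>Differentiating \<open>\<langle>Z\<^sup>\<top>, Z\<^sup>\<top>\<rangle> = 0\<close> shows that \<open>Z\<^sup>\<top>\<close> lies in the kernel of \<open>hZ\<close>.\<close>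
lemma hZ_kernel:
  assumes q: "q \<in> U"
  shows "zcoef 0 q * hZ k 0 q + zcoef 1 q * hZ k 1 q = 0"
proof -
  have "pd k (\<lambda>q. lor (Ztop X Z q) (Ztop X Z q)) q = 0"
    by (rule pd_vanishing[OF q Ztop_null])
  then have "lor (pd k (Ztop X Z) q) (Ztop X Z q) = 0"
    using pd_lor[OF smooth_Ztop smooth_Ztop q, of k] by (simp add: lor_commute)
  then show ?thesis
    by (simp add: lor_Ztop_right hZ_def)
qed

lemma hZ_eq_lor_Zperp:
  assumes q: "q \<in> U"
  shows "hZ k m q = lor (Z - Ztop X Z q) (pd k (pd m X) q)"
proof -
  have smooth_Zperp: "Cinf_on U (\<lambda>q. Z - Ztop X Z q)"
    by (intro smooth_intros smooth_Ztop)
  have "pd k (\<lambda>q. lor (Z - Ztop X Z q) (pd m X q)) q = 0"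
    by (rule pd_vanishing[OF q lor_Zperp_pd_X])
  moreover have "pd k (\<lambda>q. Z - Ztop X Z q) q = - pd k (Ztop X Z) q"
    using pd_minus[OF smooth_const smooth_Ztop q] by simp
  ultimately show ?thesis
    using pd_lor[OF smooth_Zperp smooth_pd[OF smooth_X] q, of k m]
    by (simp add: hZ_def lor_simps)
qed

lemma hZ_commute: "q \<in> U \<Longrightarrow> hZ k m q = hZ m k q"
  using hZ_eq_lor_Zperp pd_swap[OF smooth_X] by metis

lemma lor_sff_Zperp:
  assumes q: "q \<in> U"
  shows "lor (sff X i j q) (Z - Ztop X Z q) = hZ i j q"
proof -
  have "lor (tanp X (pd i (pd j X) q) q) (Z - Ztop X Z q) = 0"
    unfolding tanp_expand using lor_Zperp_pd_X[OF q]
    by (simp add: lor_simps lor_commute[of "pd _ X q"])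
  then show ?thesis
    by (simp add: sff_def norp_def lor_diff_left hZ_eq_lor_Zperp[OF q]
        lor_commute[of "pd i (pd j X) q"])
qed

text \<open>An explicit formula for the coefficient \<open>a\<close> of the rank one form \<open>hZ\<close>, which makes its
  smoothness evident.\<close>
definition aZ :: "real \<times> real \<Rightarrow> real" where
  "aZ q = (hZ 0 0 q * zdot 0 q * zdot 0 q + 2 * hZ 0 1 q * zdot 0 q * zdot 1 q
      + hZ 1 1 q * zdot 1 q * zdot 1 q) / ((zdot 0 q)\<^sup>2 + (zdot 1 q)\<^sup>2)\<^sup>2"

lemma aZ_denominator_nonzero: "q \<in> U \<Longrightarrow> ((zdot 0 q)\<^sup>2 + (zdot 1 q)\<^sup>2)\<^sup>2 \<noteq> 0"
  using zdot_sumsq_pos[of q] by (intro power_not_zero) linarith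

lemma smooth_aZ: "Cinf_on U aZ"
proof -
  have num: "Cinf_on U (\<lambda>q. hZ 0 0 q * zdot 0 q * zdot 0 q + 2 * hZ 0 1 q * zdot 0 q * zdot 1 q
      + hZ 1 1 q * zdot 1 q * zdot 1 q)"
    by (intro smooth_intros smooth_hZ smooth_zdot)
  have den: "Cinf_on U (\<lambda>q. ((zdot 0 q)\<^sup>2 + (zdot 1 q)\<^sup>2)\<^sup>2)"
    unfolding power2_eq_square by (intro smooth_intros smooth_zdot)
  show ?thesis
    unfolding aZ_def[abs_def] by (rule smooth_divide[OF _ num den]) (rule aZ_denominator_nonzero)
qed

lemma hZ_rank_one:
  assumes q: "q \<in> U" and "k < 2" "m < 2"
  shows "hZ k m q = aZ q * zdot k q * zdot m q"
proof -
  have "zcoef 0 q * hZ 0 1 q + zcoef 1 q * hZ 1 1 q = 0"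
    using hZ_kernel[OF q, of 1] hZ_commute[OF q, of 1 0] by simp
  note R = rank_one_of_null_kernel[OF hZ_kernel[OF q, of 0] this zcoef_zdot_orthogonal[OF q]
      zcoef_nonzero[OF q]]
  have "k = 0 \<or> k = 1" "m = 0 \<or> m = 1"
    using assms(2,3) by auto
  then show ?thesis
    using R hZ_commute[OF q, of 1 0] aZ_denominator_nonzero[OF q]
    by (elim disjE) (simp_all add: aZ_def field_simps)
qed

section \<open>The null frame \<open>(Z\<^sup>\<top>, W)\<close>\<close>

lemma null_tangent_exists:
  assumes q: "q \<in> U"
  shows "\<exists>w. w \<in> span {pd 0 X q, pd 1 X q} \<and> lor w w = 0 \<and> lor (Ztop X Z q) w = -1"
proof -
  define E where "E = zdot 0 q *\<^sub>R pd 0 X q + zdot 1 q *\<^sub>R pd 1 X q"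
  define s where "s = (zdot 0 q)\<^sup>2 + (zdot 1 q)\<^sup>2"
  have s: "s \<noteq> 0" using zdot_sumsq_pos[OF q] unfolding s_def by linarith
  have ET: "lor E (Ztop X Z q) = s" "lor (Ztop X Z q) E = s"
    using lor_Ztop_pd_X[OF q] lor_commute[of "Ztop X Z q" E]
    by (simp_all add: E_def s_def lor_simps power2_eq_square)
  define w where "w = (- 1 / s) *\<^sub>R (E - (lor E E / (2 * s)) *\<^sub>R Ztop X Z q)"
  have "w \<in> span {pd 0 X q, pd 1 X q}"
    unfolding w_def E_def Ztop_expand by (intro span_mul span_diff span_add span_scale span_base) auto
  moreover have "lor w w = 0" "lor (Ztop X Z q) w = -1"
    using s ET Ztop_null[OF q] by (simp_all add: w_def lor_simps field_simps)
  ultimately show ?thesis by blast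
qed

lemma null_tangent_unique:
  assumes q: "q \<in> U"
    and w: "w \<in> span {pd 0 X q, pd 1 X q}" "lor w w = 0" "lor (Ztop X Z q) w = -1"
    and w': "w' \<in> span {pd 0 X q, pd 1 X q}" "lor w' w' = 0" "lor (Ztop X Z q) w' = -1"
  shows "w = w'"
proof -
  obtain a b where ab: "w - w' = a *\<^sub>R pd 0 X q + b *\<^sub>R pd 1 X q"
    using span_pd_X_obtain span_diff[OF w(1) w'(1)] by blast
  have "a * zdot 0 q + b * zdot 1 q = lor (Ztop X Z q) (w - w')"
    using ab lor_Ztop_pd_X[OF q] lor_commute[of "Ztop X Z q"] by (simp add: lor_simps)
  then have orth: "a * zdot 0 q + b * zdot 1 q = 0"
    using w(3) w'(3) by (simp add: lor_simps)
  have parallel: "a * zcoef 1 q = b * zcoef 0 q"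
    using zdot_nonzero[OF q] orth zcoef_zdot_orthogonal[OF q]
    by (elim disjE) algebra+
  obtain l where l: "w - w' = l *\<^sub>R Ztop X Z q"
  proof (cases "zcoef 0 q = 0")
    case True
    then have "zcoef 1 q \<noteq> 0" "a = 0" using zcoef_nonzero[OF q] parallel by auto
    then show ?thesis
      using that[of "b / zcoef 1 q"] ab True by (simp add: Ztop_expand)
  next
    case False
    then have "b = a * zcoef 1 q / zcoef 0 q" using parallel by (simp add: field_simps)
    then show ?thesis
      using that[of "a / zcoef 0 q"] ab False by (simp add: Ztop_expand scaleR_add_right)
  qed
  then have "lor w w = lor (w' + l *\<^sub>R Ztop X Z q) (w' + l *\<^sub>R Ztop X Z q)"
    by (simp add: algebra_simps)
  also have "\<dots> = - 2 * l"
    using w'(2,3) Ztop_null[OF q] lor_commute[of w' "Ztop X Z q"] by (simp add: lor_simps)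
  finally show ?thesis
    using w(2) l by simp
qed

lemma Wfield_defining_props:
  assumes q: "q \<in> U"
  shows "Wfield X Z q \<in> span {pd 0 X q, pd 1 X q}" "lor (Wfield X Z q) (Wfield X Z q) = 0"
    "lor (Ztop X Z q) (Wfield X Z q) = -1"
proof -
  have "\<exists>!w. w \<in> span {pd 0 X q, pd 1 X q} \<and> lightlike w \<and> lor (Ztop X Z q) w = -1"
    using null_tangent_exists[OF q] null_tangent_unique[OF q]
    by (auto simp: lightlike_def lor_simps)
  from theI'[OF this] show "Wfield X Z q \<in> span {pd 0 X q, pd 1 X q}"
    "lor (Wfield X Z q) (Wfield X Z q) = 0" "lor (Ztop X Z q) (Wfield X Z q) = -1"
    by (simp_all add: Wfield_def lightlike_def)
qed

lemma Wfield_expand: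
  assumes q: "q \<in> U"
  shows "Wfield X Z q = Wcoef X Z 0 q *\<^sub>R pd 0 X q + Wcoef X Z 1 q *\<^sub>R pd 1 X q"
proof -
  obtain a b where ab: "Wfield X Z q = a *\<^sub>R pd 0 X q + b *\<^sub>R pd 1 X q"
    using span_pd_X_obtain Wfield_defining_props(1)[OF q] by blast
  have "Wfield X Z q = tanp X (Wfield X Z q) q"
    using tanp_tangent[OF q] ab by simp
  also have "\<dots> = Wcoef X Z 0 q *\<^sub>R pd 0 X q + Wcoef X Z 1 q *\<^sub>R pd 1 X q"
    by (simp add: tanp_expand Wcoef_def sum_lessThan_2)
  finally show ?thesis .
qed

lemma Wcoef_zdot: "q \<in> U \<Longrightarrow> Wcoef X Z 0 q * zdot 0 q + Wcoef X Z 1 q * zdot 1 q = -1"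
  using Wfield_defining_props(3) lor_commute[of "Ztop X Z q"]
  by (simp add: Wfield_expand lor_simps lor_Ztop_pd_X)

lemma lor_tangent_tangent: "lor (a *\<^sub>R pd 0 X q + b *\<^sub>R pd 1 X q) (c *\<^sub>R pd 0 X q + d *\<^sub>R pd 1 X q)
    = a * c * gm X 0 0 q + (a * d + b * c) * gm X 0 1 q + b * d * gm X 1 1 q"
  by (simp add: lor_simps gm_def[symmetric] gm_commute[of 1 0] algebra_simps)

lemma ginv_null_frame:
  assumes q: "q \<in> U" and "i < 2" "j < 2"
  shows "ginv X i j q = - (zcoef i q * Wcoef X Z j q + Wcoef X Z i q * zcoef j q)"
proof -
  have "zcoef 0 q * zcoef 0 q * gm X 0 0 q + 2 * zcoef 0 q * zcoef 1 q * gm X 0 1 q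
      + zcoef 1 q * zcoef 1 q * gm X 1 1 q = 0"
    using Ztop_null[OF q] unfolding Ztop_expand lor_tangent_tangent by (simp add: algebra_simps)
  moreover have "Wcoef X Z 0 q * Wcoef X Z 0 q * gm X 0 0 q + 2 * Wcoef X Z 0 q * Wcoef X Z 1 q * gm X 0 1 q
      + Wcoef X Z 1 q * Wcoef X Z 1 q * gm X 1 1 q = 0"
    using Wfield_defining_props(2)[OF q] unfolding Wfield_expand[OF q] lor_tangent_tangent by (simp add: algebra_simps)
  moreover have "zcoef 0 q * Wcoef X Z 0 q * gm X 0 0 q
      + (zcoef 0 q * Wcoef X Z 1 q + zcoef 1 q * Wcoef X Z 0 q) * gm X 0 1 q
      + zcoef 1 q * Wcoef X Z 1 q * gm X 1 1 q = -1"
    using Wfield_defining_props(3)[OF q] unfolding Wfield_expand[OF q] Ztop_expand lor_tangent_tangent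
    by (simp add: algebra_simps)
  ultimately have frame: "gm X 1 1 q = - 2 * zcoef 0 q * Wcoef X Z 0 q * detg X q"
    "- gm X 0 1 q = - (zcoef 0 q * Wcoef X Z 1 q + zcoef 1 q * Wcoef X Z 0 q) * detg X q"
    "gm X 0 0 q = - 2 * zcoef 1 q * Wcoef X Z 1 q * detg X q"
    unfolding ginv_explicit(5) by (rule inverse_metric_of_null_frame)+
  have "i = 0 \<or> i = 1" "j = 0 \<or> j = 1"
    using assms(2,3) by auto
  then show ?thesis
    using frame detg_nonzero[OF q]
    by (elim disjE) (simp_all add: ginv_explicit(1-4) field_simps)
qed

lemma acoef_eq_aZ:
  assumes q: "q \<in> U"
  shows "acoef X Z q = aZ q"
proof -
  have "acoef X Z q = (\<Sum>i<2. \<Sum>j<2. Wcoef X Z i q * Wcoef X Z j q * hZ i j q)"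
    unfolding acoef_def Zperp_eq
    by (simp add: sum_lessThan_2 lor_add_left lor_scaleR_left lor_sff_Zperp[OF q])
  also have "\<dots> = aZ q * (Wcoef X Z 0 q * zdot 0 q + Wcoef X Z 1 q * zdot 1 q)\<^sup>2"
    by (simp add: sum_lessThan_2 hZ_rank_one[OF q] power2_eq_square algebra_simps)
  finally show ?thesis
    using Wcoef_zdot[OF q] by simp
qed

lemma smooth_acoef: "Cinf_on U (acoef X Z)"
  using smooth_cong[OF smooth_aZ] acoef_eq_aZ by metis

lemma hZ_eq_acoef: "q \<in> U \<Longrightarrow> k < 2 \<Longrightarrow> m < 2 \<Longrightarrow> hZ k m q = acoef X Z q * zdot k q * zdot m q"
  by (simp add: hZ_rank_one acoef_eq_aZ)

section \<open>Codazzi equation and the Laplacian of \<open>a\<close>\<close>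

text \<open>The component of \<open>\<partial>\<^sub>k Z\<^sup>\<top>\<close> normal to the surface: by \<open>hZ_eq_acoef\<close>, the tangential
  component is \<open>a t\<^sub>k Z\<^sup>\<top>\<close>.\<close>
definition nZ :: "nat \<Rightarrow> real \<times> real \<Rightarrow> 'n mink" where
  "nZ k q = pd k (Ztop X Z) q - (acoef X Z q * zdot k q) *\<^sub>R Ztop X Z q"

lemma smooth_nZ: "Cinf_on U (nZ k)"
  unfolding nZ_def[abs_def] by (intro smooth_intros smooth_acoef smooth_zdot smooth_Ztop)

lemma lor_nZ_pd_X:
  assumes q: "q \<in> U" and k: "k < 2"
  shows "lor (nZ k q) (pd m X q) = 0"
proof -
  have "lor (nZ k q) (pd i X q) = hZ k i q - acoef X Z q * zdot k q * zdot i q" for i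
    by (simp add: nZ_def lor_simps hZ_def lor_Ztop_pd_X[OF q])
  then have "lor (nZ k q) (pd i X q) = 0" if "i < 2" for i
    using hZ_eq_acoef[OF q k that] by simp
  then show ?thesis
    using lor_pd_X_index[of "nZ k q" q m] by simp
qed

lemma lor_Ztop_sff: "q \<in> U \<Longrightarrow> lor (Ztop X Z q) (sff X j m q) = 0"
  using lor_sff_pd_X[of q j m] by (simp add: Ztop_expand lor_simps lor_commute[of "pd _ X q"])

lemma pd_zdot: "q \<in> U \<Longrightarrow> pd j (zdot k) q = lor (pd j (pd k X) q) Z"
  using pd_lor[OF smooth_pd[OF smooth_X] smooth_const, of q j k Z]
  by (simp add: zdot_def[abs_def] lor_simps)

lemma pd_Ztop:
  assumes q: "q \<in> U"
  shows "pd k (Ztop X Z) q = zcoef 0 q *\<^sub>R pd k (pd 0 X) q + pd k (zcoef 0) q *\<^sub>R pd 0 X q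
    + (zcoef 1 q *\<^sub>R pd k (pd 1 X) q + pd k (zcoef 1) q *\<^sub>R pd 1 X q)"
proof -
  have smooth_term: "Cinf_on U (\<lambda>q. zcoef i q *\<^sub>R pd i X q)" for i
    by (intro smooth_intros smooth_zcoef)
  have "pd k (Ztop X Z) q = pd k (\<lambda>q. zcoef 0 q *\<^sub>R pd 0 X q + zcoef 1 q *\<^sub>R pd 1 X q) q"
    by (rule pd_local[OF q]) (simp add: Ztop_expand)
  then show ?thesis
    using pd_plus[OF smooth_term smooth_term q] pd_scale[OF smooth_zcoef smooth_pd[OF smooth_X] q]
    by simp
qed

lemma lor_nZ_pd_pd_X:
  assumes q: "q \<in> U" and k: "k < 2"
  shows "lor (nZ k q) (pd j (pd m X) q)
    = zcoef 0 q * lor (sff X k 0 q) (sff X j m q) + zcoef 1 q * lor (sff X k 1 q) (sff X j m q)"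
proof -
  have "lor (nZ k q) (pd j (pd m X) q) = lor (nZ k q) (sff X j m q)"
    by (subst gauss_formula[OF q]) (simp add: lor_simps lor_nZ_pd_X[OF q k])
  also have "\<dots> = lor (pd k (Ztop X Z) q) (sff X j m q)"
    using lor_Ztop_sff[OF q] by (simp add: nZ_def lor_simps)
  finally show ?thesis
    using lor_sff_pd_X[OF q, of j m] lor_sff_pd_pd_X[OF q, of j m k]
    by (simp add: pd_Ztop[OF q] lor_simps lor_commute[of "pd _ X q"] lor_commute[of _ "sff X j m q"])
qed

lemma lor_pd_pd_Ztop:
  assumes q: "q \<in> U" and k: "k < 2"
  shows "lor (pd j (pd k (Ztop X Z)) q) (pd m X q) = - lor (nZ k q) (pd j (pd m X) q)
    + (acoef X Z q * pd j (zdot k) q + pd j (acoef X Z) q * zdot k q) * zdot m q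
    + acoef X Z q * zdot k q * hZ j m q"
proof -
  have coef: "Cinf_on U (\<lambda>q. acoef X Z q * zdot k q)"
    by (intro smooth_intros smooth_acoef smooth_zdot)
  have "pd j (\<lambda>q. lor (nZ k q) (pd m X q)) q = 0"
    by (rule pd_vanishing[OF q lor_nZ_pd_X[OF _ k]])
  then have "lor (pd j (nZ k) q) (pd m X q) = - lor (nZ k q) (pd j (pd m X) q)"
    using pd_lor[OF smooth_nZ smooth_pd[OF smooth_X] q] by simp
  moreover have "pd j (nZ k) q = pd j (pd k (Ztop X Z)) q
      - ((acoef X Z q * pd j (zdot k) q + pd j (acoef X Z) q * zdot k q) *\<^sub>R Ztop X Z q
         + (acoef X Z q * zdot k q) *\<^sub>R pd j (Ztop X Z) q)"
    unfolding nZ_def[abs_def]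
    using pd_minus[OF smooth_pd[OF smooth_Ztop] smooth_scaleR[OF coef smooth_Ztop] q]
      pd_scale[OF coef smooth_Ztop q] pd_times[OF smooth_acoef smooth_zdot q]
    by simp
  ultimately show ?thesis
    using lor_Ztop_pd_X[OF q] by (simp add: lor_simps hZ_def algebra_simps)
qed

text \<open>Codazzi: the symmetry of \<open>\<partial>\<^sub>0 \<partial>\<^sub>1 Z\<^sup>\<top>\<close> in its two derivatives.\<close>
lemma codazzi_Ztop:
  assumes q: "q \<in> U" and m: "m < 2"
  shows "(pd 0 (acoef X Z) q * zdot 1 q - pd 1 (acoef X Z) q * zdot 0 q) * zdot m q
    = lor (nZ 1 q) (pd 0 (pd m X) q) - lor (nZ 0 q) (pd 1 (pd m X) q)"
proof -
  have "lor (pd 0 (pd 1 (Ztop X Z)) q) (pd m X q) = lor (pd 1 (pd 0 (Ztop X Z)) q) (pd m X q)"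
    using pd_swap[OF smooth_Ztop q] by simp
  moreover have "pd 0 (zdot 1) q = pd 1 (zdot 0) q"
    using pd_swap[OF smooth_X q, of 0 1] by (simp add: pd_zdot[OF q])
  ultimately show ?thesis
    using lor_pd_pd_Ztop[OF q, of 1 0 m] lor_pd_pd_Ztop[OF q, of 0 1 m]
      hZ_eq_acoef[OF q _ m, of 0] hZ_eq_acoef[OF q _ m, of 1]
    by (simp add: algebra_simps)
qed

lemma Ztop_acoef_eq_gauss_curv:
  assumes q: "q \<in> U"
  shows "zcoef 0 q * pd 0 (acoef X Z) q + zcoef 1 q * pd 1 (acoef X Z) q = gauss_curv X q"
proof -
  note K = gauss_equation[OF q] and nZ = lor_nZ_pd_pd_X[OF q]
  have "lor (nZ 1 q) (pd 0 (pd 0 X) q) - lor (nZ 0 q) (pd 1 (pd 0 X) q)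
      = zcoef 1 q * (lor (sff X 1 1 q) (sff X 0 0 q) - lor (sff X 0 1 q) (sff X 1 0 q))"
    using nZ[of 1 0 0] nZ[of 0 1 0] lor_commute[of "sff X 1 0 q" "sff X 0 0 q"]
    by (simp add: algebra_simps)
  then have c0: "(pd 0 (acoef X Z) q * zdot 1 q - pd 1 (acoef X Z) q * zdot 0 q) * zdot 0 q
      = zcoef 1 q * gauss_curv X q * detg X q"
    using codazzi_Ztop[OF q, of 0] K by (simp add: mult.assoc)
  have "lor (nZ 1 q) (pd 0 (pd 1 X) q) - lor (nZ 0 q) (pd 1 (pd 1 X) q)
      = - zcoef 0 q * (lor (sff X 1 1 q) (sff X 0 0 q) - lor (sff X 0 1 q) (sff X 1 0 q))"
    using nZ[of 1 0 1] nZ[of 0 1 1] lor_commute[of "sff X 1 1 q" "sff X 0 0 q"]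
      lor_commute[of "sff X 1 1 q" "sff X 0 1 q"] sff_commute[OF q, of 1 0]
    by (simp add: algebra_simps)
  then have c1: "(pd 0 (acoef X Z) q * zdot 1 q - pd 1 (acoef X Z) q * zdot 0 q) * zdot 1 q
      = - zcoef 0 q * gauss_curv X q * detg X q"
    using codazzi_Ztop[OF q, of 1] K by (simp add: mult.assoc)
  have "zcoef 0 q * detg X q = gm X 1 1 q * zdot 0 q - gm X 0 1 q * zdot 1 q"
    "zcoef 1 q * detg X q = gm X 0 0 q * zdot 1 q - gm X 0 1 q * zdot 0 q"
    using detg_nonzero[OF q] by (simp_all add: zcoef_def ginv_explicit(1-4) field_simps)
  from null_coordinate_identity[OF this ginv_explicit(5) zcoef_zdot_orthogonal[OF q] c0 c1
      detg_nonzero[OF q] zdot_nonzero[OF q]]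
  show ?thesis .
qed

text \<open>In coordinates, \<open>\<nabla> Z\<^sup>\<top> = a t \<otimes> Z\<^sup>\<top>\<close>.\<close>
lemma pd_zcoef:
  assumes q: "q \<in> U" and j: "j < 2"
  shows "pd j (zcoef 0) q
      = acoef X Z q * zdot j q * zcoef 0 q - (zcoef 0 q * chr X 0 j 0 q + zcoef 1 q * chr X 0 j 1 q)"
    and "pd j (zcoef 1) q
      = acoef X Z q * zdot j q * zcoef 1 q - (zcoef 0 q * chr X 1 j 0 q + zcoef 1 q * chr X 1 j 1 q)"
proof -
  define c0 where "c0 = pd j (zcoef 0) q - (acoef X Z q * zdot j q * zcoef 0 q
      - (zcoef 0 q * chr X 0 j 0 q + zcoef 1 q * chr X 0 j 1 q))"
  define c1 where "c1 = pd j (zcoef 1) q - (acoef X Z q * zdot j q * zcoef 1 q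
      - (zcoef 0 q * chr X 1 j 0 q + zcoef 1 q * chr X 1 j 1 q))"
  have "lor (c0 *\<^sub>R pd 0 X q + c1 *\<^sub>R pd 1 X q) (pd m X q) = 0" if m: "m < 2" for m
  proof -
    have "lor (pd j (Ztop X Z) q) (pd m X q)
      = zcoef 0 q * (chr X 0 j 0 q * gm X 0 m q + chr X 1 j 0 q * gm X 1 m q)
        + pd j (zcoef 0) q * gm X 0 m q
        + zcoef 1 q * (chr X 0 j 1 q * gm X 0 m q + chr X 1 j 1 q * gm X 1 m q)
        + pd j (zcoef 1) q * gm X 1 m q"
      unfolding pd_Ztop[OF q] by (simp add: lor_simps lor_pd_pd_X[OF q] lor_pd_X_pd_X)
    moreover have "lor (pd j (Ztop X Z) q) (pd m X q) = acoef X Z q * zdot j q * zdot m q"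
      using hZ_eq_acoef[OF q j m] unfolding hZ_def .
    moreover have "zdot m q = zcoef 0 q * gm X 0 m q + zcoef 1 q * gm X 1 m q"
      using lor_Ztop_pd_X[OF q, of m] by (simp add: Ztop_expand lor_simps lor_pd_X_pd_X)
    ultimately show ?thesis
      unfolding c0_def c1_def by (simp add: lor_simps lor_pd_X_pd_X algebra_simps)
  qed
  from tangent_coords_eq_0[OF q this this] have "c0 = 0" "c1 = 0"
    by simp_all
  then show "pd j (zcoef 0) q
      = acoef X Z q * zdot j q * zcoef 0 q - (zcoef 0 q * chr X 0 j 0 q + zcoef 1 q * chr X 0 j 1 q)"
    and "pd j (zcoef 1) q
      = acoef X Z q * zdot j q * zcoef 1 q - (zcoef 0 q * chr X 1 j 0 q + zcoef 1 q * chr X 1 j 1 q)"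
    by (simp_all add: c0_def c1_def)
qed

lemma lap_null_frame:
  assumes f: "Cinf_on U f" and q: "q \<in> U"
  shows "lap X f q = - 2 * (\<Sum>i<2. \<Sum>j<2. zcoef i q * Wcoef X Z j q * hess f i j q)"
  using hess_commute[OF f q, of 0 1]
  by (simp add: lap_eq_hess sum_lessThan_2 ginv_null_frame[OF q] algebra_simps)

text \<open>\<open>W(Z\<^sup>\<top>(f)) = Hess f (W, Z\<^sup>\<top>) + (\<nabla>\<^sub>W Z\<^sup>\<top>) f\<close>, where
  \<open>\<nabla>\<^sub>W Z\<^sup>\<top> = a \<langle>W, Z\<^sup>\<top>\<rangle> Z\<^sup>\<top> = - a Z\<^sup>\<top>\<close>.\<close>
lemma Wderiv_Ztop_deriv:
  assumes f: "Cinf_on U f" and q: "q \<in> U"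
  shows "Wderiv X Z (\<lambda>q. zcoef 0 q * pd 0 f q + zcoef 1 q * pd 1 f q) q
    = (\<Sum>i<2. \<Sum>j<2. zcoef i q * Wcoef X Z j q * hess f j i q)
      - acoef X Z q * (zcoef 0 q * pd 0 f q + zcoef 1 q * pd 1 f q)"
proof -
  have smooth_term: "Cinf_on U (\<lambda>q. zcoef i q * pd i f q)" for i
    by (intro smooth_intros smooth_zcoef f)
  have "pd j (\<lambda>q. zcoef 0 q * pd 0 f q + zcoef 1 q * pd 1 f q) q
      = zcoef 0 q * pd j (pd 0 f) q + pd j (zcoef 0) q * pd 0 f q
      + (zcoef 1 q * pd j (pd 1 f) q + pd j (zcoef 1) q * pd 1 f q)" for j
    using pd_plus[OF smooth_term smooth_term q] pd_times[OF smooth_zcoef smooth_pd[OF f] q] by simp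
  then have "Wderiv X Z (\<lambda>q. zcoef 0 q * pd 0 f q + zcoef 1 q * pd 1 f q) q
    = (\<Sum>i<2. \<Sum>j<2. zcoef i q * Wcoef X Z j q * hess f j i q)
      + acoef X Z q * (zcoef 0 q * pd 0 f q + zcoef 1 q * pd 1 f q)
        * (Wcoef X Z 0 q * zdot 0 q + Wcoef X Z 1 q * zdot 1 q)"
    by (simp add: Wderiv_def hess_def sum_lessThan_2 pd_zcoef[OF q] chr_commute[of _ 1 0]
        algebra_simps)
  then show ?thesis
    using Wcoef_zdot[OF q] by simp
qed

lemma Wderiv_local: "q \<in> U \<Longrightarrow> (\<And>q. q \<in> U \<Longrightarrow> f q = g q) \<Longrightarrow> Wderiv X Z f q = Wderiv X Z g q"
  unfolding Wderiv_def using pd_local[of q f g] by simp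

lemma lap_acoef:
  assumes q: "q \<in> U"
  shows "lap X (acoef X Z) q = - 2 * gauss_curv X q * acoef X Z q - 2 * Wderiv X Z (gauss_curv X) q"
proof -
  let ?Ta = "\<lambda>q. zcoef 0 q * pd 0 (acoef X Z) q + zcoef 1 q * pd 1 (acoef X Z) q"
  have "Wderiv X Z (gauss_curv X) q = Wderiv X Z ?Ta q"
    by (rule Wderiv_local[OF q]) (simp add: Ztop_acoef_eq_gauss_curv)
  also have "\<dots> = (\<Sum>i<2. \<Sum>j<2. zcoef i q * Wcoef X Z j q * hess (acoef X Z) i j q)
      - acoef X Z q * gauss_curv X q"
    using Wderiv_Ztop_deriv[OF smooth_acoef q] Ztop_acoef_eq_gauss_curv[OF q]
      hess_commute[OF smooth_acoef q] by simp
  finally show ?thesis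
    using lap_null_frame[OF smooth_acoef q] by simp
qed

end

theorem mainTheorem12:
  fixes U :: "(real \<times> real) set" and X :: "real \<times> real \<Rightarrow> 'n::finite mink" and Z :: "'n mink"
  assumes "timelike_surface U X"
    and "lor Z Z = 1"
    and "canonical_null_direction U X Z"
  shows "(\<forall>p\<in>U. lap X (acoef X Z) p
                 = - 2 * gauss_curv X p * acoef X Z p - 2 * Wderiv X Z (gauss_curv X) p)
       \<and> ((\<forall>p\<in>U. gauss_curv X p = 0) \<longrightarrow> (\<forall>p\<in>U. lap X (acoef X Z) p = 0))"
proof -
  interpret null_direction_chart U X Z
    using assms(1,3) by unfold_locales (auto simp: timelike_surface_def canonical_null_direction_def)
  have "Wderiv X Z (gauss_curv X) p = 0" if "\<forall>p\<in>U. gauss_curv X p = 0" "p \<in> U" for p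
    using Wderiv_local[of p "gauss_curv X" "\<lambda>q. 0"] that by (simp add: Wderiv_def)
  then show ?thesis
    using lap_acoef by simp
qed

end
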